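(* Let $I$ be a set, $\mathcal{E}=(E_i)_{i\in I}$ a family of nonempty sets, $R,S$ multiple relations in $\mathcal{E}$, and $L\subseteq I$ with $J_R\cap J_S\subseteq L\subseteq J_R\cup J_S$. Then $(R\bowtie S)_{|L}=R_{|L\cap J_R}\bowtie S_{|L\cap J_S}$. In particular, if $J_R\cap J_S=\emptyset$ this holds for every $L\subseteq J_R\cup J_S$.
   Context: For $J\subseteq I$, $Z_J=\prod_{j\in J}E_j$ ($Z_\emptyset=\{\bullet\}$). A multiple relation is $R=(J_R,G_R)$ with $J_R\subseteq I$, $G_R\subseteq Z_{J_R}$; $R_{|K}=(K,\{x_{|K}:x\in G_R\})$ for $K\subseteq J_R$; $R\bowtie S=(J_R\cup J_S,\{x\in Z_{J_R\cup J_S}: x_{|J_R}\in G_R,\ x_{|J_S}\in G_S\})$. *)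

theory Defs
  imports "HOL-Library.FuncSet"
begin

text \<open>Elements of Z_J are extensional functions on J (PiE J E); Z_{} = {\<lambda>_. undefined}.
A multiple relation is a pair (J_R, G_R).\<close>

type_synonym ('i, 'e) mrel = "'i set \<times> ('i \<Rightarrow> 'e) set"

definition is_mrel :: "'i set \<Rightarrow> ('i \<Rightarrow> 'e set) \<Rightarrow> ('i, 'e) mrel \<Rightarrow> bool" where
  "is_mrel I E R \<longleftrightarrow> fst R \<subseteq> I \<and> snd R \<subseteq> PiE (fst R) E"

definition mrestr :: "('i, 'e) mrel \<Rightarrow> 'i set \<Rightarrow> ('i, 'e) mrel" where
  "mrestr R K = (K, (\<lambda>x. restrict x K) ` snd R)"

definition mjoin :: "('i \<Rightarrow> 'e set) \<Rightarrow> ('i, 'e) mrel \<Rightarrow> ('i, 'e) mrel \<Rightarrow> ('i, 'e) mrel" where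
  "mjoin E R S = (fst R \<union> fst S,
     {x \<in> PiE (fst R \<union> fst S) E. restrict x (fst R) \<in> snd R \<and> restrict x (fst S) \<in> snd S})"

end

theory Submission
  imports Defs
begin

text \<open>A tuple of the restricted join is assembled from a tuple y on L and tuples r of R and s of S
  that agree with y on L: since every index shared by R and S lies in L, r and s agree on
  their common indices, so y, r and s glue to one tuple on J_R \<union> J_S.\<close>

lemma PiE_glue:
  assumes f: "f \<in> PiE A E" and g: "g \<in> PiE B E" and agree: "\<And>i. i \<in> A \<inter> B \<Longrightarrow> f i = g i"
  shows "\<exists>h \<in> PiE (A \<union> B) E. restrict h A = f \<and> restrict h B = g"
proof
  let ?h = "\<lambda>i. if i \<in> A then f i else g i"
  show "?h \<in> PiE (A \<union> B) E"
    using f g by (auto simp: PiE_def Pi_def extensional_def)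
  show "restrict ?h A = f \<and> restrict ?h B = g"
    using f g agree by (auto simp: restrict_def PiE_def extensional_def)
qed

lemma restrict_eq_on: "restrict f K = restrict g K \<Longrightarrow> i \<in> K \<Longrightarrow> f i = g i"
  by (metis restrict_apply')

lemma mrestr_mjoin_subset:
  assumes "L \<subseteq> fst R \<union> fst S"
  shows "snd (mrestr (mjoin E R S) L)
           \<subseteq> snd (mjoin E (mrestr R (L \<inter> fst R)) (mrestr S (L \<inter> fst S)))"
proof
  fix y assume "y \<in> snd (mrestr (mjoin E R S) L)"
  then obtain x where y: "y = restrict x L" and x: "x \<in> PiE (fst R \<union> fst S) E"
    and xR: "restrict x (fst R) \<in> snd R" and xS: "restrict x (fst S) \<in> snd S"
    by (auto simp: mrestr_def mjoin_def)
  have "L \<inter> fst R \<union> L \<inter> fst S = L" using assms by auto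
  moreover have "y \<in> PiE L E"
    using x assms by (auto simp: y)
  ultimately have "y \<in> PiE (L \<inter> fst R \<union> L \<inter> fst S) E" by simp
  moreover have "restrict y (L \<inter> fst R) \<in> (\<lambda>r. restrict r (L \<inter> fst R)) ` snd R"
    unfolding y by (rule image_eqI[OF _ xR]) auto
  moreover have "restrict y (L \<inter> fst S) \<in> (\<lambda>s. restrict s (L \<inter> fst S)) ` snd S"
    unfolding y by (rule image_eqI[OF _ xS]) auto
  ultimately show "y \<in> snd (mjoin E (mrestr R (L \<inter> fst R)) (mrestr S (L \<inter> fst S)))"
    unfolding mrestr_def mjoin_def by simp
qed

lemma mjoin_mrestr_subset:
  assumes R: "snd R \<subseteq> PiE (fst R) E" and S: "snd S \<subseteq> PiE (fst S) E"
    and L: "fst R \<inter> fst S \<subseteq> L" "L \<subseteq> fst R \<union> fst S"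
  shows "snd (mjoin E (mrestr R (L \<inter> fst R)) (mrestr S (L \<inter> fst S)))
           \<subseteq> snd (mrestr (mjoin E R S) L)"
proof
  fix y assume "y \<in> snd (mjoin E (mrestr R (L \<inter> fst R)) (mrestr S (L \<inter> fst S)))"
  moreover have "L \<inter> fst R \<union> L \<inter> fst S = L" using L by auto
  ultimately have y: "y \<in> PiE L E"
    and "restrict y (L \<inter> fst R) \<in> (\<lambda>r. restrict r (L \<inter> fst R)) ` snd R"
    and "restrict y (L \<inter> fst S) \<in> (\<lambda>s. restrict s (L \<inter> fst S)) ` snd S"
    by (simp_all add: mrestr_def mjoin_def)
  then obtain r s
    where r: "r \<in> snd R" "restrict y (L \<inter> fst R) = restrict r (L \<inter> fst R)"
      and s: "s \<in> snd S" "restrict y (L \<inter> fst S) = restrict s (L \<inter> fst S)"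
    by blast
  have "r \<in> PiE (fst R) E" using r(1) R by blast
  then obtain z where z: "z \<in> PiE (L \<union> fst R) E" and zy: "restrict z L = y"
    and zr: "restrict z (fst R) = r"
    using PiE_glue[OF y _ restrict_eq_on[OF r(2)]] by blast
  have "z i = s i" if "i \<in> (L \<union> fst R) \<inter> fst S" for i
  proof -
    have "i \<in> L" using that L by auto
    then show ?thesis
      using that fun_cong[OF zy, of i] restrict_eq_on[OF s(2), of i] by auto
  qed
  moreover have "s \<in> PiE (fst S) E" using s(1) S by blast
  ultimately obtain x where x: "x \<in> PiE (L \<union> fst R \<union> fst S) E"
    and xz: "restrict x (L \<union> fst R) = z" and xs: "restrict x (fst S) = s"
    using PiE_glue[OF z] by blast
  have "restrict x L = y"
    using xz zy by auto
  moreover have "restrict x (fst R) = r"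
    using xz zr by auto
  moreover have "L \<union> fst R \<union> fst S = fst R \<union> fst S" using L by auto
  ultimately have "x \<in> snd (mjoin E R S)" and "y = restrict x L"
    using x xs r(1) s(1) by (simp_all add: mjoin_def)
  then show "y \<in> snd (mrestr (mjoin E R S) L)"
    unfolding mrestr_def by simp
qed

lemma mrestr_mjoin:
  assumes "snd R \<subseteq> PiE (fst R) E" and "snd S \<subseteq> PiE (fst S) E"
    and "fst R \<inter> fst S \<subseteq> L" and "L \<subseteq> fst R \<union> fst S"
  shows "mrestr (mjoin E R S) L = mjoin E (mrestr R (L \<inter> fst R)) (mrestr S (L \<inter> fst S))"
proof (rule prod_eqI)
  show "fst (mrestr (mjoin E R S) L)
          = fst (mjoin E (mrestr R (L \<inter> fst R)) (mrestr S (L \<inter> fst S)))"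
    using assms(4) by (simp add: mrestr_def mjoin_def Int_Un_distrib[symmetric] Int_absorb2)
  show "snd (mrestr (mjoin E R S) L)
          = snd (mjoin E (mrestr R (L \<inter> fst R)) (mrestr S (L \<inter> fst S)))"
    using mrestr_mjoin_subset[OF assms(4)] mjoin_mrestr_subset[OF assms] by (rule subset_antisym)
qed

theorem mainTheorem11:
  fixes I :: "'i set" and E :: "'i \<Rightarrow> 'e set" and R S :: "('i, 'e) mrel"
  assumes "\<forall>i\<in>I. E i \<noteq> {}"
    and "is_mrel I E R" and "is_mrel I E S"
  shows "(\<forall>L. L \<subseteq> I \<and> fst R \<inter> fst S \<subseteq> L \<and> L \<subseteq> fst R \<union> fst S \<longrightarrow>
            mrestr (mjoin E R S) L = mjoin E (mrestr R (L \<inter> fst R)) (mrestr S (L \<inter> fst S)))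
      \<and> (fst R \<inter> fst S = {} \<longrightarrow> (\<forall>L. L \<subseteq> fst R \<union> fst S \<longrightarrow>
            mrestr (mjoin E R S) L = mjoin E (mrestr R (L \<inter> fst R)) (mrestr S (L \<inter> fst S))))"
proof -
  have "snd R \<subseteq> PiE (fst R) E" "snd S \<subseteq> PiE (fst S) E"
    using assms(2,3) by (simp_all add: is_mrel_def)
  then show ?thesis
    using mrestr_mjoin[of R E S] by simp
qed

end
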